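(* Let $\mathcal H_s$ be finite-dimensional, $U$ an operator on $\mathcal H_s$, $\mathcal H_d=\mathbb C^2$ with orthonormal basis $\{|\Phi_d\rangle,|\Phi_d^\perp\rangle\}$, $\varrho_d=|\Phi_d\rangle\langle\Phi_d|$, and $h_0=|\Phi_d^\perp\rangle\langle\Phi_d|\otimes U+|\Phi_d\rangle\langle\Phi_d^\perp|\otimes U^\dagger$. Let $\tilde h_{ds}$ be a Hermitian operator on $\mathcal H_d\otimes\mathcal H_s$ with block decomposition (with respect to the detector basis) $\tilde h_{ds}=\begin{pmatrix}A&B^\dagger\\ B&C\end{pmatrix}$, i.e. $A=\langle\Phi_d|\tilde h_{ds}|\Phi_d\rangle$, $B=\langle\Phi_d^\perp|\tilde h_{ds}|\Phi_d\rangle$, $C=\langle\Phi_d^\perp|\tilde h_{ds}|\Phi_d^\perp\rangle$. Let $\gamma>0$, $\tilde\gamma\ge0$, $J=\sqrt{\gamma/\delta t}$, and $\mathcal L_{\delta t}:=-iJ\,\mathrm{ad}(h_0)-\tfrac{\tilde\gamma}{2}\mathrm{ad}^2(\tilde h_{ds})$. Then for every density matrix $\rho$ on $\mathcal H_s$, $$\lim_{\delta t\to0}\frac{\mathrm{Tr}_d\big[e^{\delta t\,\mathcal L_{\delta t}}(\varrho_d\otimes\rho)\big]-\rho}{\delta t}=\gamma\,\mathcal D(U)\rho+\tilde\gamma\,\mathcal D(A)\rho+\tilde\gamma\,\mathcal D(B)\rho .$$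
   Context: $\mathrm{ad}(X)Y=[X,Y]$, $\mathrm{ad}^2(X)Y=[X,[X,Y]]$; $\mathcal D(L)\rho:=L\rho L^\dagger-\tfrac12\{L^\dagger L,\rho\}$; $\mathrm{Tr}_d$ is the partial trace over the detector qubit. *)

theory Defs
  imports "HOL-Analysis.Analysis"
begin

text \<open>The detector space is indexed by the
  two-element type 2, the joint space by 2 \<times> 'n (detector first).\<close>

type_synonym 'n cmat = "complex^'n^'n"

definition cscale :: "complex \<Rightarrow> 'n::finite cmat \<Rightarrow> 'n cmat" where
  "cscale c M = (\<chi> i j. c * M$i$j)"

definition adj :: "complex^'m::finite^'n::finite \<Rightarrow> complex^'n::finite^'m::finite" where
  "adj M = (\<chi> i j. cnj (M$j$i))"

definition hermitian :: "'n::finite cmat \<Rightarrow> bool" where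
  "hermitian M \<longleftrightarrow> adj M = M"

definition orthonormal2 :: "complex^2 \<Rightarrow> complex^2 \<Rightarrow> bool" where
  "orthonormal2 u v \<longleftrightarrow>
     (\<Sum>i\<in>UNIV. cnj (u$i) * u$i) = 1 \<and> (\<Sum>i\<in>UNIV. cnj (v$i) * v$i) = 1 \<and>
     (\<Sum>i\<in>UNIV. cnj (u$i) * v$i) = 0"

definition ketbra :: "complex^'n::finite \<Rightarrow> complex^'n::finite \<Rightarrow> 'n cmat" where
  "ketbra u v = (\<chi> i j. u$i * cnj (v$j))"

definition ctrace :: "'n::finite cmat \<Rightarrow> complex" where
  "ctrace M = (\<Sum>i\<in>UNIV. M$i$i)"

definition density :: "'n::finite cmat \<Rightarrow> bool" where
  "density \<rho> \<longleftrightarrow> hermitian \<rho> \<and> ctrace \<rho> = 1 \<and>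
     (\<forall>v::complex^'n. let q = (\<Sum>i\<in>UNIV. \<Sum>j\<in>UNIV. cnj (v$i) * \<rho>$i$j * v$j)
                       in Im q = 0 \<and> Re q \<ge> 0)"

definition kron :: "'d::finite cmat \<Rightarrow> 'n::finite cmat \<Rightarrow> ('d \<times> 'n) cmat" where
  "kron A B = (\<chi> p q. A$(fst p)$(fst q) * B$(snd p)$(snd q))"

definition ptrace_d :: "('d::finite \<times> 'n::finite) cmat \<Rightarrow> 'n cmat" where
  "ptrace_d M = (\<chi> k l. \<Sum>i\<in>UNIV. M$(i,k)$(i,l))"

definition block :: "complex^'d::finite \<Rightarrow> ('d \<times> 'n::finite) cmat \<Rightarrow> complex^'d \<Rightarrow> 'n cmat" where
  "block u M v = (\<chi> k l. \<Sum>i\<in>UNIV. \<Sum>j\<in>UNIV. cnj (u$i) * M$(i,k)$(j,l) * v$j)"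

definition comm :: "'n::finite cmat \<Rightarrow> 'n cmat \<Rightarrow> 'n cmat" where
  "comm X Y = X ** Y - Y ** X"

definition ad :: "'n::finite cmat \<Rightarrow> 'n cmat \<Rightarrow> 'n cmat" where
  "ad X = comm X"

definition dissipator :: "'n::finite cmat \<Rightarrow> 'n cmat \<Rightarrow> 'n cmat" where
  "dissipator L \<rho> = L ** \<rho> ** adj L
      - cscale (1/2) (adj L ** L ** \<rho> + \<rho> ** (adj L ** L))"

definition sexp :: "real \<Rightarrow> ('n::finite cmat \<Rightarrow> 'n cmat) \<Rightarrow> 'n cmat \<Rightarrow> 'n cmat" where
  "sexp t S X = (\<Sum>k. (t ^ k / fact k) *\<^sub>R (S ^^ k) X)"

end

theory Submission
  imports Defs
begin

text \<open>Put \<open>s = sqrt \<delta>t\<close>. Then \<open>\<delta>t \<L>(\<delta>t) = s P + s^2 Q\<close> with \<open>P = -i sqrt \<gamma> ad(h\<^sub>0)\<close> and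
  \<open>Q = -(\<gamma>'/2) ad(h')\<^sup>2\<close>, and for bounded \<open>P\<close>, \<open>Q\<close> the exponential series gives
  \<open>exp(s P + s^2 Q) X = X + s P X + s^2 (Q X + P(P X)/2) + O(s^3)\<close>. The singular first-order term
  vanishes under the partial trace because \<open>h\<^sub>0\<close> only couples \<open>\<Phi>\<close> to \<open>\<Phi>\<^sup>\<bottom>\<close>, and the
  second-order term is the dissipator: \<open>Tr\<^sub>d P(P(\<rho>\<^sub>d \<otimes> \<rho>))/2 = \<gamma> D(U)\<rho>\<close> and
  \<open>Tr\<^sub>d Q(\<rho>\<^sub>d \<otimes> \<rho>) = \<gamma>' (D(A)\<rho> + D(B)\<rho>)\<close>. These operator identities only use that
  \<open>v \<mapsto> \<Phi> \<otimes> v\<close> and \<open>v \<mapsto> \<Phi>\<^sup>\<bottom> \<otimes> v\<close> are isometries whose ranges are orthogonal and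
  together span the joint space.\<close>

section \<open>Second-order expansion of the exponential series\<close>

lemma norm_funpow_le:
  fixes N :: "'a::real_normed_vector \<Rightarrow> 'a"
  assumes "\<And>y. norm (N y) \<le> c * norm y" "c \<ge> 0"
  shows "norm ((N ^^ k) x) \<le> c ^ k * norm x"
proof (induction k)
  case (Suc k)
  have "norm ((N ^^ Suc k) x) \<le> c * norm ((N ^^ k) x)" using assms(1) by simp
  also have "\<dots> \<le> c * (c ^ k * norm x)" using Suc assms(2) by (rule mult_left_mono)
  finally show ?case by (simp add: mult.assoc)
qed simp

lemma exp_series_second_order_remainder:
  fixes N :: "'a::banach \<Rightarrow> 'a"
  assumes N: "\<And>y. norm (N y) \<le> c * norm y" and c: "c \<ge> 0"
  shows "norm ((\<Sum>k. (1 / fact k) *\<^sub>R (N ^^ k) x) - (x + N x + (1/2) *\<^sub>R N (N x)))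
           \<le> c ^ 3 * exp c * norm x"
proof -
  define f where "f k = (1 / fact k) *\<^sub>R (N ^^ k) x" for k
  have f_le: "norm (f k) \<le> c ^ k / fact k * norm x" for k
    using norm_funpow_le[OF N c, of k x] by (simp add: f_def divide_simps)
  have exp_sums: "(\<lambda>k. c ^ k / fact k * norm x) sums (exp c * norm x)"
    using sums_mult2[OF exp_converges[of c]] by (simp add: divide_inverse mult.commute)
  have "summable f"
    using exp_sums f_le by (intro summable_comparison_test[OF _ sums_summable]) auto
  then have "(\<Sum>k. f k) = (\<Sum>k. f (k + 3)) + (\<Sum>k<3. f k)"
    by (rule suminf_split_initial_segment)
  then have "(\<Sum>k. f k) - (x + N x + (1/2) *\<^sub>R N (N x)) = (\<Sum>k. f (k + 3))"
    by (simp add: f_def numeral_3_eq_3)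
  also have "norm \<dots> \<le> (\<Sum>k. c ^ 3 * (c ^ k / fact k * norm x))"
  proof (rule norm_suminf_le)
    show "norm (f (k + 3)) \<le> c ^ 3 * (c ^ k / fact k * norm x)" for k
    proof -
      have "norm (f (k + 3)) \<le> c ^ (k + 3) / fact (k + 3) * norm x" by (rule f_le)
      also have "\<dots> \<le> c ^ (k + 3) / fact k * norm x"
        using c by (intro mult_right_mono divide_left_mono) (auto simp: fact_mono)
      finally show ?thesis by (simp add: power_add field_simps)
    qed
    show "summable (\<lambda>k. c ^ 3 * (c ^ k / fact k * norm x))"
      using exp_sums by (intro summable_mult) (auto simp: sums_iff)
  qed
  also have "\<dots> = c ^ 3 * exp c * norm x"
    using sums_mult[OF exp_sums, of "c ^ 3"] by (simp add: sums_iff mult.assoc)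
  finally show ?thesis unfolding f_def .
qed

lemma exp_series_perturbed_remainder_tendsto_zero:
  fixes P Q :: "'a::banach \<Rightarrow> 'a"
  assumes P: "bounded_linear P" and Q: "bounded_linear Q"
  defines "N s y \<equiv> s *\<^sub>R P y + s^2 *\<^sub>R Q y"
  shows "((\<lambda>s. (1 / s^2) *\<^sub>R
             ((\<Sum>k. (1 / fact k) *\<^sub>R (N s ^^ k) x) - (x + N s x + (1/2) *\<^sub>R N s (N s x))))
          \<longlongrightarrow> 0) (at_right 0)"
proof -
  obtain K where K: "K > 0" "\<And>y. norm (P y) \<le> K * norm y" "\<And>y. norm (Q y) \<le> K * norm y"
  proof -
    obtain KP KQ
      where KPQ: "\<And>y. norm (P y) \<le> norm y * KP" "\<And>y. norm (Q y) \<le> norm y * KQ" "KP > 0"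
      using bounded_linear.pos_bounded[OF P] bounded_linear.pos_bounded[OF Q] by metis
    have "norm (P y) \<le> max KP KQ * norm y" "norm (Q y) \<le> max KP KQ * norm y" for y
      using KPQ(1,2)[of y] mult_right_mono[of KP "max KP KQ" "norm y"]
        mult_right_mono[of KQ "max KP KQ" "norm y"]
      by (simp_all add: mult.commute)
    with KPQ(3) show thesis by (intro that[of "max KP KQ"]) auto
  qed
  have "norm ((\<Sum>k. (1 / fact k) *\<^sub>R (N s ^^ k) x) - (x + N s x + (1/2) *\<^sub>R N s (N s x))) / s^2
          \<le> s * (8 * K^3 * exp (2 * K) * norm x)" if s: "0 < s" "s < 1" for s
  proof -
    have N_le: "norm (N s y) \<le> (K * s + K * s^2) * norm y" for y
    proof -
      have "norm (N s y) \<le> s * (K * norm y) + s^2 * (K * norm y)"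
        unfolding N_def using s K(2,3)[of y]
        by (intro norm_triangle_le add_mono) (auto intro: mult_left_mono)
      then show ?thesis by (simp add: algebra_simps)
    qed
    have c: "0 \<le> K * s + K * s^2" "K * s + K * s^2 \<le> 2 * K * s"
      using s K(1) by (auto simp: power2_eq_square)
    moreover have "2 * K * s \<le> 2 * K" using s K(1) by simp
    ultimately have exp_le: "exp (K * s + K * s^2) \<le> exp (2 * K)" by simp
    have "norm ((\<Sum>k. (1 / fact k) *\<^sub>R (N s ^^ k) x) - (x + N s x + (1/2) *\<^sub>R N s (N s x)))
          \<le> (K * s + K * s^2) ^ 3 * exp (K * s + K * s^2) * norm x"
      by (rule exp_series_second_order_remainder[OF N_le c(1)])
    also have "\<dots> \<le> (2 * K * s) ^ 3 * exp (2 * K) * norm x"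
      using c s K(1) exp_le by (intro mult_right_mono mult_mono power_mono) auto
    finally show ?thesis
      using s by (simp add: divide_right_mono field_simps eval_nat_numeral)
  qed
  moreover have "eventually (\<lambda>s::real. 0 < s \<and> s < 1) (at_right 0)"
    by (simp add: eventually_at_right_field) (meson zero_less_one)
  ultimately have "eventually (\<lambda>s. norm ((1 / s^2) *\<^sub>R
      ((\<Sum>k. (1 / fact k) *\<^sub>R (N s ^^ k) x) - (x + N s x + (1/2) *\<^sub>R N s (N s x))))
        \<le> s * (8 * K^3 * exp (2 * K) * norm x)) (at_right 0)"
    by (auto elim!: eventually_mono)
  moreover have "((\<lambda>s. s * (8 * K^3 * exp (2 * K) * norm x)) \<longlongrightarrow> 0) (at_right 0)"
    by (auto intro!: tendsto_eq_intros)
  ultimately show ?thesis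
    by (rule Lim_null_comparison)
qed

lemma exp_series_perturbed_second_order:
  fixes P Q :: "'a::banach \<Rightarrow> 'a"
  assumes P: "bounded_linear P" and Q: "bounded_linear Q"
  shows "((\<lambda>s. (1 / s^2) *\<^sub>R ((\<Sum>k. (1 / fact k) *\<^sub>R ((\<lambda>y. s *\<^sub>R P y + s^2 *\<^sub>R Q y) ^^ k) x)
                                  - x - s *\<^sub>R P x))
          \<longlongrightarrow> Q x + (1/2) *\<^sub>R P (P x)) (at_right 0)"
proof -
  define N where "N s y = s *\<^sub>R P y + s^2 *\<^sub>R Q y" for s y
  define R where
    "R s = (\<Sum>k. (1 / fact k) *\<^sub>R (N s ^^ k) x) - (x + N s x + (1/2) *\<^sub>R N s (N s x))" for s
  define G where
    "G s = (1/2) *\<^sub>R (s *\<^sub>R (P (Q x) + Q (P x)) + s^2 *\<^sub>R Q (Q x)) + (1 / s^2) *\<^sub>R R s" for s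
  have "((\<lambda>s. (1 / s^2) *\<^sub>R R s) \<longlongrightarrow> 0) (at_right 0)"
    unfolding R_def N_def by (rule exp_series_perturbed_remainder_tendsto_zero[OF P Q])
  then have "(G \<longlongrightarrow> 0) (at_right 0)"
    unfolding G_def by (rule tendsto_add_zero[rotated]) (auto intro!: tendsto_eq_intros)
  then have "((\<lambda>s. Q x + (1/2) *\<^sub>R P (P x) + G s) \<longlongrightarrow> Q x + (1/2) *\<^sub>R P (P x)) (at_right 0)"
    by (auto intro!: tendsto_eq_intros)
  moreover have "Q x + (1/2) *\<^sub>R P (P x) + G s
      = (1 / s^2) *\<^sub>R ((\<Sum>k. (1 / fact k) *\<^sub>R (N s ^^ k) x) - x - s *\<^sub>R P x)" if "s > 0" for s
  proof -
    have "N s (N s x) = s^2 *\<^sub>R P (P x) + s^3 *\<^sub>R (P (Q x) + Q (P x)) + s^4 *\<^sub>R Q (Q x)"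
      using P Q
      by (simp add: N_def bounded_linear.linear linear_add linear_scale algebra_simps eval_nat_numeral)
    then show ?thesis
      using that by (simp add: G_def R_def N_def algebra_simps eval_nat_numeral)
  qed
  ultimately show ?thesis
    unfolding N_def
    by (blast intro: Lim_transform_eventually eventually_mono[OF eventually_at_right_less])
qed

lemma funpow_scaleR_linear:
  fixes L :: "'a::real_vector \<Rightarrow> 'a"
  assumes "linear L"
  shows "((\<lambda>y. c *\<^sub>R L y) ^^ k) x = (c ^ k) *\<^sub>R (L ^^ k) x"
  by (induction k) (simp_all add: linear_scale[OF assms])

lemma filterlim_sqrt_at_right_0: "filterlim sqrt (at_right 0) (at_right (0::real))"
proof -
  have "(sqrt \<longlongrightarrow> sqrt 0) (at_right (0::real))"
    by (intro tendsto_intros)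
  moreover have "\<forall>\<^sub>F x in at_right (0::real). sqrt x \<in> {0<..} \<and> sqrt x \<noteq> 0"
    using eventually_at_right_less[of 0] by (rule eventually_mono) simp
  ultimately show ?thesis by (simp add: filterlim_at)
qed

text \<open>After the substitution \<open>dt = s^2\<close>, the hypotheses on \<open>T x\<close> and \<open>T (P x)\<close> remove the
  divergent terms of order \<open>1/dt\<close> and \<open>1/sqrt dt\<close>.\<close>

lemma exp_series_singular_generator_limit:
  fixes P Q :: "'a::banach \<Rightarrow> 'a" and T :: "'a \<Rightarrow> 'b::real_normed_vector"
  assumes P: "bounded_linear P" and Q: "bounded_linear Q" and T: "bounded_linear T"
    and Tx: "T x = y" and TPx: "T (P x) = 0"
    and L: "\<And>dt z. dt > 0 \<Longrightarrow> L dt z = (1 / sqrt dt) *\<^sub>R P z + Q z"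
  shows "((\<lambda>dt. (1 / dt) *\<^sub>R (T (\<Sum>k. (dt ^ k / fact k) *\<^sub>R (L dt ^^ k) x) - y))
          \<longlongrightarrow> T (Q x + (1/2) *\<^sub>R P (P x))) (at_right 0)"
proof -
  define E where "E s = (1 / s^2) *\<^sub>R ((\<Sum>k. (1 / fact k) *\<^sub>R ((\<lambda>z. s *\<^sub>R P z + s^2 *\<^sub>R Q z) ^^ k) x)
                                    - x - s *\<^sub>R P x)" for s
  have "((\<lambda>dt. T (E (sqrt dt))) \<longlongrightarrow> T (Q x + (1/2) *\<^sub>R P (P x))) (at_right 0)"
    unfolding E_def
    by (rule filterlim_compose[OF bounded_linear.tendsto[OF T exp_series_perturbed_second_order[OF P Q]]
                                  filterlim_sqrt_at_right_0])
  moreover have "T (E (sqrt dt)) = (1 / dt) *\<^sub>R (T (\<Sum>k. (dt ^ k / fact k) *\<^sub>R (L dt ^^ k) x) - y)"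
    if "dt > 0" for dt
  proof -
    have "L dt = (\<lambda>z. (1 / sqrt dt) *\<^sub>R P z + Q z)"
      using L[OF that] by (simp add: fun_eq_iff)
    then have "linear (L dt)"
      using P Q by (simp add: bounded_linear.linear bounded_linear_add bounded_linear_const_scaleR)
    moreover have "(\<lambda>z. sqrt dt *\<^sub>R P z + (sqrt dt)^2 *\<^sub>R Q z) = (\<lambda>z. dt *\<^sub>R L dt z)"
      using that by (simp add: L fun_eq_iff scaleR_add_right real_div_sqrt)
    ultimately have "(\<Sum>k. (dt ^ k / fact k) *\<^sub>R (L dt ^^ k) x)
             = (\<Sum>k. (1 / fact k) *\<^sub>R ((\<lambda>z. sqrt dt *\<^sub>R P z + (sqrt dt)^2 *\<^sub>R Q z) ^^ k) x)"
      by (simp add: funpow_scaleR_linear)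
    then show ?thesis
      using that T Tx TPx by (simp add: E_def linear_diff linear_scale bounded_linear.linear)
  qed
  ultimately show ?thesis
    by (blast intro: Lim_transform_eventually eventually_mono[OF eventually_at_right_less])
qed

lemma matrix_add_rdistrib:
  "((A::'a::semiring_1^'m::finite^'n::finite) + B) ** (C::'a^'p::finite^'m) = A ** C + B ** C"
  by (simp add: vec_eq_iff matrix_matrix_mult_def sum.distrib distrib_right)

lemma matrix_diff_ldistrib:
  "(A::'a::ring_1^'m::finite^'n::finite) ** (B - C) = A ** B - A ** (C::'a^'p::finite^'m)"
  by (simp add: vec_eq_iff matrix_matrix_mult_def sum_subtractf right_diff_distrib)

lemma matrix_diff_rdistrib:
  "((A::'a::ring_1^'m::finite^'n::finite) - B) ** (C::'a^'p::finite^'m) = A ** C - B ** C"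
  by (simp add: vec_eq_iff matrix_matrix_mult_def sum_subtractf left_diff_distrib)

lemma matrix_neg_left:
  "(- (A::'a::ring_1^'m::finite^'n::finite)) ** (B::'a^'p::finite^'m) = - (A ** B)"
  by (simp add: vec_eq_iff matrix_matrix_mult_def sum_negf)

text \<open>The simplifier normalises \<open>Y + Y\<close> to \<open>2 * Y\<close>, where \<open>*\<close> is the entrywise product of
  \<open>vec\<close>; these two rules move such numerals out of matrix products.\<close>

lemma matrix_numeral_left:
  "(numeral k * (A::'a::comm_ring_1^'m::finite^'n::finite)) ** (B::'a^'p::finite^'m)
     = numeral k * (A ** B)"
  by (simp add: vec_eq_iff matrix_matrix_mult_def sum_distrib_left mult.assoc)

lemma matrix_numeral_right:
  "(A::'a::comm_ring_1^'m::finite^'n::finite) ** (numeral k * (B::'a^'p::finite^'m))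
     = numeral k * (A ** B)"
  by (simp add: vec_eq_iff matrix_matrix_mult_def sum_distrib_left algebra_simps)

lemmas matrix_ring_simps = matrix_mul_assoc matrix_add_ldistrib matrix_add_rdistrib
  matrix_diff_ldistrib matrix_diff_rdistrib matrix_neg_left
  matrix_numeral_left matrix_numeral_right

lemma adj_matrix_mul:
  "adj ((A::complex^'m::finite^'n::finite) ** (B::complex^'p::finite^'m)) = adj B ** adj A"
  by (simp add: vec_eq_iff matrix_matrix_mult_def adj_def mult.commute)

lemma adj_adj [simp]: "adj (adj A) = A"
  by (simp add: vec_eq_iff adj_def)

lemma adj_zero [simp]: "adj (0 :: complex^'m::finite^'n::finite) = 0"
  by (simp add: vec_eq_iff adj_def)

lemma cscale_cscale: "cscale a (cscale b X) = cscale (a * b) X"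
  by (simp add: vec_eq_iff cscale_def)

lemma cscale_zero [simp]: "cscale c 0 = 0"
  by (simp add: vec_eq_iff cscale_def)

lemma cscale_of_real: "cscale (complex_of_real r) X = r *\<^sub>R X"
  by (simp add: vec_eq_iff cscale_def scaleR_conv_of_real[where 'a = complex])

lemma ad_cscale: "ad H (cscale c X) = cscale c (ad H X)"
  by (simp add: vec_eq_iff cscale_def ad_def comm_def matrix_matrix_mult_def sum_distrib_left
      algebra_simps)

lemma ptrace_d_cscale: "ptrace_d (cscale c M) = cscale c (ptrace_d M)"
  by (simp add: vec_eq_iff cscale_def ptrace_d_def sum_distrib_left)

lemma linear_cscale: "linear (cscale c)"
  by (rule linearI) (simp_all add: vec_eq_iff cscale_def algebra_simps scaleR_conv_of_real)

lemma linear_ad: "linear (ad H)"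
  by (rule linearI) (simp_all add: vec_eq_iff ad_def comm_def matrix_matrix_mult_def
      sum.distrib scaleR_sum_right algebra_simps)

lemma linear_ptrace_d: "linear ptrace_d"
  by (rule linearI) (simp_all add: ptrace_d_def vec_eq_iff sum.distrib scaleR_sum_right)

section \<open>Tracing out a detector given by two complementary isometries\<close>

locale complementary_isometries =
  fixes e f :: "complex^'n::finite^'m::finite"
  assumes isometry_left: "adj e ** e = mat 1"
    and isometry_right: "adj f ** f = mat 1"
    and orthogonal_ranges: "adj e ** f = 0"
    and resolution_of_identity: "e ** adj e + f ** adj f = mat 1"
begin

definition trace_out :: "complex^'m^'m \<Rightarrow> complex^'n^'n" where
  "trace_out Y = adj e ** Y ** e + adj f ** Y ** f"

definition hopping :: "complex^'n^'n \<Rightarrow> complex^'m^'m" where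
  "hopping U = f ** U ** adj e + e ** adj U ** adj f"

lemma orthogonal_ranges': "adj f ** e = 0"
  using arg_cong[OF orthogonal_ranges, of adj] by (simp add: adj_matrix_mul)

lemma cancel_isometries:
  "Z ** adj e ** e = Z" "Z ** adj f ** f = Z" "Z ** adj e ** f = 0" "Z ** adj f ** e = 0"
  by (simp_all add: matrix_mul_assoc[symmetric] isometry_left isometry_right orthogonal_ranges
      orthogonal_ranges')

lemmas isometry_simps = isometry_left isometry_right orthogonal_ranges orthogonal_ranges'
  cancel_isometries

lemma trace_out_dilation: "trace_out (e ** \<rho> ** adj e) = \<rho>"
  by (simp add: trace_out_def matrix_ring_simps isometry_simps)

lemma trace_out_ad_hopping: "trace_out (ad (hopping U) (e ** \<rho> ** adj e)) = 0"
  by (simp add: trace_out_def hopping_def ad_def comm_def matrix_ring_simps isometry_simps)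

lemma trace_out_ad_hopping_twice:
  "trace_out (ad (hopping U) (ad (hopping U) (e ** \<rho> ** adj e))) = (- 2) *\<^sub>R dissipator U \<rho>"
proof -
  have "trace_out (ad (hopping U) (ad (hopping U) (e ** \<rho> ** adj e)))
      = adj U ** U ** \<rho> + \<rho> ** (adj U ** U) - (U ** \<rho> ** adj U + U ** \<rho> ** adj U)"
    by (simp add: trace_out_def hopping_def ad_def comm_def matrix_ring_simps isometry_simps)
  then show ?thesis
    by (simp add: vec_eq_iff dissipator_def cscale_def scaleR_conv_of_real[where 'a = complex]
        algebra_simps)
qed

lemma insert_resolution_of_identity:
  "Z ** H ** H = Z ** H ** e ** adj e ** H + Z ** H ** f ** adj f ** H"
proof -
  have "Z ** H ** H = Z ** H ** (e ** adj e + f ** adj f) ** H"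
    by (simp add: resolution_of_identity)
  then show ?thesis by (simp add: matrix_ring_simps)
qed

lemma trace_out_ad_hermitian_twice:
  assumes "hermitian H"
  defines "A \<equiv> adj e ** H ** e" and "B \<equiv> adj f ** H ** e"
  shows "trace_out (ad H (ad H (e ** \<rho> ** adj e)))
           = (- 2) *\<^sub>R (dissipator A \<rho> + dissipator B \<rho>)"
proof -
  have "trace_out (ad H (ad H (e ** \<rho> ** adj e)))
      = (adj A ** A + adj B ** B) ** \<rho> + \<rho> ** (adj A ** A + adj B ** B)
        - (A ** \<rho> ** adj A + A ** \<rho> ** adj A + B ** \<rho> ** adj B + B ** \<rho> ** adj B)"
    using assms(1) unfolding hermitian_def
    by (simp add: A_def B_def trace_out_def ad_def comm_def matrix_ring_simps adj_matrix_mul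
        isometry_simps insert_resolution_of_identity)
  then show ?thesis
    by (simp add: vec_eq_iff dissipator_def cscale_def matrix_add_ldistrib matrix_add_rdistrib
        scaleR_conv_of_real[where 'a = complex] algebra_simps)
qed

end

text \<open>\<open>ket_tensor u\<close> is the matrix of \<open>v \<mapsto> u \<otimes> v\<close>, with the detector index first as
  in \<open>kron\<close>.\<close>

definition ket_tensor :: "complex^'d::finite \<Rightarrow> complex^'n::finite^('d \<times> 'n)" where
  "ket_tensor u = (\<chi> p l. if snd p = l then u$(fst p) else 0)"

lemma sum_UNIV_prod:
  "(\<Sum>p\<in>(UNIV::('a::finite \<times> 'b::finite) set). g p) = (\<Sum>i\<in>UNIV. \<Sum>m\<in>UNIV. g (i, m))"
  by (simp only: sum.cartesian_product UNIV_Times_UNIV case_prod_beta' prod.collapse)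

lemma adj_ket_tensor_mult:
  "adj (ket_tensor u :: complex^'n::finite^('d::finite \<times> 'n)) ** ket_tensor v
     = mat (\<Sum>i\<in>UNIV. cnj (u$i) * v$i)"
proof -
  have "(adj (ket_tensor u :: complex^'n^('d \<times> 'n)) ** ket_tensor v)$k$l
      = (\<Sum>i\<in>UNIV. \<Sum>m\<in>UNIV. if m = k then (if m = l then cnj (u$i) * v$i else 0) else 0)" for k l
    unfolding matrix_matrix_mult_def adj_def ket_tensor_def sum_UNIV_prod
    by (simp only: vec_lambda_beta fst_conv snd_conv) (intro sum.cong refl, simp)
  then show ?thesis by (simp add: vec_eq_iff mat_def)
qed

lemma kron_ketbra_eq: "kron (ketbra u v) W = ket_tensor u ** W ** adj (ket_tensor v)"
  by (simp add: vec_eq_iff matrix_matrix_mult_def adj_def ket_tensor_def kron_def ketbra_def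
      if_distrib if_distribR sum.delta sum.delta' sum_distrib_right cong: if_cong)

lemma block_eq: "block u M v = adj (ket_tensor u) ** M ** ket_tensor v"
proof -
  have "(\<Sum>i\<in>UNIV. \<Sum>j\<in>UNIV. cnj (u$i) * M$(i,k)$(j,l) * v$j)
      = (\<Sum>j\<in>UNIV. (\<Sum>i\<in>UNIV. cnj (u$i) * M$(i,k)$(j,l)) * v$j)" for k l
    by (subst sum.swap) (simp add: sum_distrib_right)
  then show ?thesis
    by (simp add: vec_eq_iff matrix_matrix_mult_def adj_def ket_tensor_def block_def sum_UNIV_prod
        if_distrib if_distribR sum.delta sum.delta' cong: if_cong)
qed

lemma orthonormal2_resolution_of_identity:
  assumes "orthonormal2 u v"
  shows "u$i * cnj (u$j) + v$i * cnj (v$j) = (if i = j then 1 else 0)"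
proof -
  define W :: "complex^2^2" where "W = (\<chi> i j. if j = 1 then u$i else v$i)"
  have "(\<Sum>i\<in>UNIV. cnj (v$i) * u$i) = cnj (\<Sum>i\<in>UNIV. cnj (u$i) * v$i)"
    by (simp add: mult.commute)
  also have "\<dots> = 0"
    using assms unfolding orthonormal2_def by (metis complex_cnj_zero)
  finally have "(\<Sum>i\<in>UNIV. cnj (v$i) * u$i) = 0" .
  then have "adj W ** W = mat 1"
    using assms unfolding orthonormal2_def
    by (simp add: vec_eq_iff forall_2 matrix_matrix_mult_def adj_def W_def mat_def sum_2)
  then have "W ** adj W = mat 1"
    using matrix_left_right_inverse by blast
  then have "(W ** adj W) $ i $ j = mat 1 $ i $ j" by simp
  then show ?thesis by (simp add: matrix_matrix_mult_def adj_def W_def mat_def sum_2)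
qed

lemma complementary_isometries_ket_tensor:
  assumes "orthonormal2 u v"
  shows "complementary_isometries (ket_tensor u :: complex^'n::finite^(2 \<times> 'n)) (ket_tensor v)"
proof
  from assms show "adj (ket_tensor u :: complex^'n^(2 \<times> 'n)) ** ket_tensor u = mat 1"
    "adj (ket_tensor v :: complex^'n^(2 \<times> 'n)) ** ket_tensor v = mat 1"
    "adj (ket_tensor u :: complex^'n^(2 \<times> 'n)) ** ket_tensor v = 0"
    by (simp_all add: adj_ket_tensor_mult orthonormal2_def vec_eq_iff mat_def)
  have "((ket_tensor u :: complex^'n^(2 \<times> 'n)) ** adj (ket_tensor u) + ket_tensor v ** adj (ket_tensor v))$p$q
      = (if snd p = snd q then u$fst p * cnj (u$fst q) + v$fst p * cnj (v$fst q) else 0)" for p q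
  proof -
    have if_prod: "(if a = k then x else 0) * (if b = k then y else 0)
        = (if k = a then (if a = b then x * y else 0) else (0::complex))" for a b k :: 'n and x y
      by auto
    show ?thesis
      by (simp add: matrix_matrix_mult_def adj_def ket_tensor_def if_distrib[where f = cnj] if_prod
          cong: if_cong)
  qed
  then show "(ket_tensor u :: complex^'n^(2 \<times> 'n)) ** adj (ket_tensor u) + ket_tensor v ** adj (ket_tensor v)
      = mat 1"
    using orthonormal2_resolution_of_identity[OF assms] by (simp add: vec_eq_iff mat_def prod_eq_iff)
qed

lemma ptrace_d_eq_trace_out:
  assumes "orthonormal2 u v"
  shows "ptrace_d = complementary_isometries.trace_out (ket_tensor u) (ket_tensor v)"
proof
  fix M :: "complex^(2 \<times> 'n::finite)^(2 \<times> 'n)"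
  have completeness: "cnj (u$i) * u$j + cnj (v$i) * v$j = (if i = j then 1 else 0)" for i j
    using arg_cong[OF orthonormal2_resolution_of_identity[OF assms, of i j], of cnj] by simp
  have "(block u M u + block v M v)$k$l = ptrace_d M $k$l" for k l
  proof -
    have "(block u M u + block v M v)$k$l
        = (\<Sum>i\<in>UNIV. \<Sum>j\<in>UNIV. (cnj (u$i) * u$j + cnj (v$i) * v$j) * M$(i,k)$(j,l))"
      by (simp add: block_def sum.distrib[symmetric] algebra_simps)
    also have "\<dots> = ptrace_d M $k$l"
      by (simp add: completeness ptrace_d_def if_distrib[where f = "\<lambda>c. c * _"] cong: if_cong)
    finally show ?thesis .
  qed
  then show "ptrace_d M = complementary_isometries.trace_out (ket_tensor u) (ket_tensor v) M"
    unfolding complementary_isometries.trace_out_def[OF complementary_isometries_ket_tensor[OF assms]]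
    by (simp add: vec_eq_iff block_eq)
qed

section \<open>The terms of the expansion after tracing out the detector\<close>

context
  fixes u v :: "complex^2" and \<rho> U :: "complex^'n::finite^'n"
  assumes onb: "orthonormal2 u v"
begin

interpretation complementary_isometries "ket_tensor u :: complex^'n^(2 \<times> 'n)" "ket_tensor v"
  using onb by (rule complementary_isometries_ket_tensor)

lemma ptrace_d_kron_ketbra_self: "ptrace_d (kron (ketbra u u) \<rho>) = \<rho>"
  unfolding ptrace_d_eq_trace_out[OF onb] kron_ketbra_eq by (rule trace_out_dilation)

lemma ptrace_d_ad_hopping:
  "ptrace_d (ad (kron (ketbra v u) U + kron (ketbra u v) (adj U)) (kron (ketbra u u) \<rho>)) = 0"
  unfolding ptrace_d_eq_trace_out[OF onb] kron_ketbra_eq hopping_def[symmetric]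
  by (rule trace_out_ad_hopping)

lemma ptrace_d_ad_hopping_twice:
  defines "h \<equiv> kron (ketbra v u) U + kron (ketbra u v) (adj U)"
  shows "ptrace_d (ad h (ad h (kron (ketbra u u) \<rho>))) = (- 2) *\<^sub>R dissipator U \<rho>"
  unfolding h_def ptrace_d_eq_trace_out[OF onb] kron_ketbra_eq hopping_def[symmetric]
  by (rule trace_out_ad_hopping_twice)

lemma ptrace_d_ad_hermitian_twice:
  assumes "hermitian H"
  shows "ptrace_d (ad H (ad H (kron (ketbra u u) \<rho>)))
           = (- 2) *\<^sub>R (dissipator (block u H u) \<rho> + dissipator (block v H u) \<rho>)"
  unfolding ptrace_d_eq_trace_out[OF onb] block_eq kron_ketbra_eq
  by (rule trace_out_ad_hermitian_twice[OF assms])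

end

lemma bounded_linear_cscale_ad: "bounded_linear (\<lambda>Y. cscale c (ad H Y))"
  using linear_compose[OF linear_ad linear_cscale]
  by (simp add: o_def linear_conv_bounded_linear[symmetric])

lemma bounded_linear_cscale_ad_twice: "bounded_linear (\<lambda>Y. cscale c (ad H (ad H Y)))"
  using linear_compose[OF linear_compose[OF linear_ad linear_ad] linear_cscale]
  by (simp add: o_def linear_conv_bounded_linear[symmetric])

lemma bounded_linear_ptrace_d: "bounded_linear ptrace_d"
  using linear_ptrace_d by (simp add: linear_conv_bounded_linear)

theorem mainTheorem6:
  fixes U \<rho> :: "complex^'n^'n"
    and \<phi> \<phi>p :: "complex^2"
    and ht :: "complex^(2 \<times> 'n)^(2 \<times> 'n)"
    and \<gamma> \<gamma>t :: real
  assumes onb: "orthonormal2 \<phi> \<phi>p"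
    and herm: "hermitian ht"
    and g: "\<gamma> > 0" and gt: "\<gamma>t \<ge> 0"
    and rho: "density \<rho>"
  shows
    "let \<rho>d = ketbra \<phi> \<phi>;
         h0 = kron (ketbra \<phi>p \<phi>) U + kron (ketbra \<phi> \<phi>p) (adj U);
         A = block \<phi> ht \<phi>;
         B = block \<phi>p ht \<phi>;
         J = (\<lambda>dt::real. sqrt (\<gamma> / dt));
         L = (\<lambda>dt X. cscale (- \<i> * complex_of_real (J dt)) (ad h0 X)
                    - cscale (complex_of_real (\<gamma>t / 2)) (ad ht (ad ht X)))
     in ((\<lambda>dt. (1 / dt) *\<^sub>R (ptrace_d (sexp dt (L dt) (kron \<rho>d \<rho>)) - \<rho>))
          \<longlongrightarrow> cscale (complex_of_real \<gamma>) (dissipator U \<rho>)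
              + cscale (complex_of_real \<gamma>t) (dissipator A \<rho>)
              + cscale (complex_of_real \<gamma>t) (dissipator B \<rho>)) (at_right 0)"
proof -
  define X where "X = kron (ketbra \<phi> \<phi>) \<rho>"
  define h0 where "h0 = kron (ketbra \<phi>p \<phi>) U + kron (ketbra \<phi> \<phi>p) (adj U)"
  define c where "c = - \<i> * complex_of_real (sqrt \<gamma>)"
  define P where "P Y = cscale c (ad h0 Y)" for Y
  define Q where "Q Y = - cscale (complex_of_real (\<gamma>t / 2)) (ad ht (ad ht Y))" for Y
  have cc: "c * c = complex_of_real (- \<gamma>)"
    using g by (simp add: c_def power2_eq_square[symmetric] power_mult_distrib flip: of_real_power)
  have second_order: "ptrace_d (Q X + (1/2) *\<^sub>R P (P X))
      = cscale (complex_of_real \<gamma>) (dissipator U \<rho>)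
        + cscale (complex_of_real \<gamma>t) (dissipator (block \<phi> ht \<phi>) \<rho>)
        + cscale (complex_of_real \<gamma>t) (dissipator (block \<phi>p ht \<phi>) \<rho>)"
    unfolding P_def Q_def linear_add[OF linear_ptrace_d] linear_neg[OF linear_ptrace_d]
      linear_scale[OF linear_ptrace_d] ad_cscale cscale_cscale cc ptrace_d_cscale cscale_of_real
    by (simp add: X_def h0_def ptrace_d_ad_hopping_twice[OF onb]
        ptrace_d_ad_hermitian_twice[OF onb herm] scaleR_add_right scaleR_diff_right)
  have generator: "cscale (- \<i> * complex_of_real (sqrt (\<gamma> / dt))) (ad h0 Y)
      - cscale (complex_of_real (\<gamma>t / 2)) (ad ht (ad ht Y)) = (1 / sqrt dt) *\<^sub>R P Y + Q Y"
    if "dt > 0" for dt Y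
    using that g
    by (simp add: P_def Q_def c_def cscale_of_real[symmetric] cscale_cscale real_sqrt_divide)
  have "bounded_linear P" "bounded_linear Q"
    unfolding P_def[abs_def] Q_def[abs_def]
    by (intro bounded_linear_cscale_ad bounded_linear_minus bounded_linear_cscale_ad_twice)+
  moreover have "ptrace_d X = \<rho>" "ptrace_d (P X) = 0"
    by (simp_all add: X_def h0_def P_def ptrace_d_cscale ptrace_d_kron_ketbra_self[OF onb]
        ptrace_d_ad_hopping[OF onb])
  ultimately show ?thesis
    unfolding Let_def sexp_def X_def[symmetric] h0_def[symmetric] second_order[symmetric]
    by (rule exp_series_singular_generator_limit[OF _ _ bounded_linear_ptrace_d _ _ generator])
qed

end
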